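(* Assume the random gather-step setting below. For every Byzantine strategy $z=z(X)$ (the vectors $z^{(j)}$ being arbitrary functions of the delivering configuration $X$), $$\mathbb{E}_X\big[\Delta(\theta_1,\dots,\theta_h)\big]\le m\,\Delta(\lambda_1,\dots,\lambda_h)\quad\text{with } m=1-\frac{\rho}{4}<1 .$$
   Context: Median of reals: for $y_1,\dots,y_q\in\mathbb{R}$ with order statistics $y_{(1)}\le\dots\le y_{(q)}$, $\mathrm{median}=y_{((q+1)/2)}$ if $q$ is odd and $\frac12(y_{(q/2)}+y_{(q/2+1)})$ if $q$ is even; $\mathrm{Median}$ of vectors is applied coordinate-wise. Coordinate-wise diameters: $\Delta_i(v_1,\dots,v_h)=\max_{j,k}|v_j[i]-v_k[i]|$, $\Delta=\sum_{i=1}^d\Delta_i$. Random gather-step setting: integers $f\ge1$, $n$, $h=n-f$, and $q$ with $2f+2\le q\le\lfloor h/2\rfloor$; fixed vectors $\lambda_1,\dots,\lambda_h\in\mathbb{R}^d$ held by the correct servers $1,\dots,h$. Let $S_j=\{s\subset\{1,\dots,h\}\setminus\{j\}:|s|\in\{q-f-1,\dots,q-1\}\}$ and $S=\prod_{j=1}^hS_j$. A delivering configuration $X=(X_1,\dots,X_h)$ is a random element of $S$ with $P(X=s)\ge\rho$ for all $s\in S$, for some $\rho>0$. Given $X$, each correct server $j$ receives arbitrary vectors $z^{(j)}_1,\dots,z^{(j)}_{q-1-|X_j|}\in\mathbb{R}^d$ (possibly depending on $X$) and computes $\theta_j=\mathrm{Median}\big(\lambda_j,(\lambda_k)_{k\in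 X_j},z^{(j)}_1,\dots,z^{(j)}_{q-1-|X_j|}\big)$. *)

theory Defs
  imports "HOL-Probability.Probability"
begin

text \<open>Median of a finite list of reals (order statistics, 1-based in the paper).\<close>
definition median :: "real list \<Rightarrow> real" where
  "median ys = (let q = length ys; zs = sort ys in
     if odd q then zs ! (q div 2)
     else (zs ! (q div 2 - 1) + zs ! (q div 2)) / 2)"

definition Median :: "(real ^ 'd) list \<Rightarrow> real ^ 'd" where
  "Median vs = (\<chi> i. median (map (\<lambda>v. v $ i) vs))"

definition Delta_i :: "nat \<Rightarrow> (nat \<Rightarrow> real ^ 'd) \<Rightarrow> 'd \<Rightarrow> real" where
  "Delta_i h v i = Max {\<bar>v j $ i - v k $ i\<bar> | j k. j \<in> {1..h} \<and> k \<in> {1..h}}"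

definition Delta :: "nat \<Rightarrow> (nat \<Rightarrow> real ^ 'd) \<Rightarrow> real" where
  "Delta h v = (\<Sum>i\<in>UNIV. Delta_i h v i)"

definition S_j :: "nat \<Rightarrow> nat \<Rightarrow> nat \<Rightarrow> nat \<Rightarrow> nat set set" where
  "S_j f q h j = {s. s \<subseteq> {1..h} - {j} \<and> card s \<in> {q - f - 1..q - 1}}"

definition S_conf :: "nat \<Rightarrow> nat \<Rightarrow> nat \<Rightarrow> (nat \<Rightarrow> nat set) set" where
  "S_conf f q h = PiE {1..h} (S_j f q h)"

text \<open>Output of correct server j, given configuration X and Byzantine vectors z X j t
  (t = 1, ..., q - 1 - |X j|).\<close>
definition theta ::
  "nat \<Rightarrow> (nat \<Rightarrow> real ^ 'd) \<Rightarrow> ((nat \<Rightarrow> nat set) \<Rightarrow> nat \<Rightarrow> nat \<Rightarrow> real ^ 'd)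
     \<Rightarrow> (nat \<Rightarrow> nat set) \<Rightarrow> nat \<Rightarrow> real ^ 'd" where
  "theta q lam z X j = Median (lam j # map lam (sorted_list_of_set (X j))
       @ map (z X j) [1..<q - card (X j)])"

end

theory Submission
  imports Defs
begin

text \<open>
  In each coordinate, the median of q reals of which at most f lie below and at most f above
  an interval lies in that interval, provided 2f + 2 \<le> q. A correct server combines its own
  value, at least q - f - 1 values of other correct servers and at most f Byzantine values, so
  every output lies in the range of the correct inputs: the range never grows. Since 2q \<le> h,
  one of the two halves of the range contains q correct values, and in the configuration where
  every server receives q - 1 of them (hence no Byzantine value) all outputs lie in that half.
  That configuration has probability at least \<rho>, so the expected range shrinks by the
  factor 1 - \<rho>/2.
\<close>

lemma sorted_nth_le_if_few_above:
  fixes zs :: "real list"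
  assumes "sorted zs" "k < length zs" "length (filter (\<lambda>y. b < y) zs) < length zs - k"
  shows "zs ! k \<le> b"
proof (rule ccontr)
  assume "\<not> zs ! k \<le> b"
  have "b < y" if "y \<in> set (drop k zs)" for y
  proof -
    from that obtain m where "m < length zs - k" "y = zs ! (k + m)"
      by (auto simp: in_set_conv_nth)
    moreover have "zs ! k \<le> zs ! (k + m)"
      using assms(1) \<open>m < length zs - k\<close> by (intro sorted_nth_mono) auto
    ultimately show "b < y" using \<open>\<not> zs ! k \<le> b\<close> by simp
  qed
  then have "filter (\<lambda>y. b < y) (drop k zs) = drop k zs" by simp
  moreover have "filter (\<lambda>y. b < y) zs = filter (\<lambda>y. b < y) (take k zs) @ filter (\<lambda>y. b < y) (drop k zs)"
    by (simp flip: filter_append)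
  ultimately have "length zs - k \<le> length (filter (\<lambda>y. b < y) zs)" by simp
  with assms(3) show False by simp
qed

lemma sorted_nth_ge_if_few_below:
  fixes zs :: "real list"
  assumes "sorted zs" "k < length zs" "length (filter (\<lambda>y. y < a) zs) \<le> k"
  shows "a \<le> zs ! k"
proof (rule ccontr)
  assume "\<not> a \<le> zs ! k"
  have "y < a" if "y \<in> set (take (Suc k) zs)" for y
  proof -
    from that obtain m where "m < Suc k" "y = zs ! m"
      by (auto simp: in_set_conv_nth)
    moreover have "zs ! m \<le> zs ! k"
      using assms(1,2) \<open>m < Suc k\<close> by (intro sorted_nth_mono) auto
    ultimately show "y < a" using \<open>\<not> a \<le> zs ! k\<close> by simp
  qed
  then have "filter (\<lambda>y. y < a) (take (Suc k) zs) = take (Suc k) zs" by simp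
  moreover have "filter (\<lambda>y. y < a) zs = filter (\<lambda>y. y < a) (take (Suc k) zs) @ filter (\<lambda>y. y < a) (drop (Suc k) zs)"
    by (simp flip: filter_append)
  ultimately have "Suc k \<le> length (filter (\<lambda>y. y < a) zs)" using assms(2) by simp
  with assms(3) show False by simp
qed

lemma length_filter_sort: "length (filter P (sort xs)) = length (filter P xs)"
  by (metis mset_filter mset_sort size_mset)

lemma median_between:
  fixes ys :: "real list"
  assumes "length ys = q" "2 * f + 2 \<le> q"
    and "length (filter (\<lambda>y. y < a) ys) \<le> f" "length (filter (\<lambda>y. b < y) ys) \<le> f"
  shows "a \<le> median ys \<and> median ys \<le> b"
proof -
  have "a \<le> sort ys ! k \<and> sort ys ! k \<le> b" if "q div 2 - 1 \<le> k" "k \<le> q div 2" for k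
    using assms that
    by (intro conjI sorted_nth_ge_if_few_below sorted_nth_le_if_few_above) (auto simp: length_filter_sort)
  from this[of "q div 2"] this[of "q div 2 - 1"] show ?thesis
    using assms(1) by (auto simp: median_def Let_def)
qed

lemma Delta_i_def_image:
  "Delta_i h v i = Max ((\<lambda>(j, k). \<bar>v j $ i - v k $ i\<bar>) ` ({1..h} \<times> {1..h}))"
proof -
  have "{\<bar>v j $ i - v k $ i\<bar> | j k. j \<in> {1..h} \<and> k \<in> {1..h}}
      = (\<lambda>(j, k). \<bar>v j $ i - v k $ i\<bar>) ` ({1..h} \<times> {1..h})"
    by (auto simp: image_iff) force
  then show ?thesis by (simp add: Delta_i_def)
qed

lemma abs_diff_le_Delta_i:
  assumes "j \<in> {1..h}" "k \<in> {1..h}"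
  shows "\<bar>v j $ i - v k $ i\<bar> \<le> Delta_i h v i"
  unfolding Delta_i_def_image using assms by (intro Max_ge) auto

lemma Delta_i_nonneg: "h \<ge> 1 \<Longrightarrow> 0 \<le> Delta_i h v i"
  using abs_diff_le_Delta_i[of 1 h 1 v i] by simp

lemma Delta_i_le_if_bounded:
  assumes "h \<ge> 1" "\<forall>j\<in>{1..h}. a \<le> v j $ i \<and> v j $ i \<le> b"
  shows "Delta_i h v i \<le> b - a"
  unfolding Delta_i_def_image using assms by (subst Max_le_iff) (auto simp: abs_le_iff intro!: diff_mono)

lemma Delta_i_bounding_interval:
  assumes "h \<ge> 1"
  obtains a where "\<forall>k\<in>{1..h}. a \<le> v k $ i \<and> v k $ i \<le> a + Delta_i h v i"
proof
  define V where "V = (\<lambda>k. v k $ i) ` {1..h}"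
  have V: "finite V" "V \<noteq> {}" using assms by (auto simp: V_def)
  obtain kmin kmax where "kmin \<in> {1..h}" "v kmin $ i = Min V" "kmax \<in> {1..h}" "v kmax $ i = Max V"
    using Min_in[OF V] Max_in[OF V] by (auto simp: V_def)
  then have "Max V \<le> Min V + Delta_i h v i"
    using abs_diff_le_Delta_i[of kmax h kmin v i] by simp
  moreover have "Min V \<le> v k $ i \<and> v k $ i \<le> Max V" if "k \<in> {1..h}" for k
    using V(1) that by (simp add: V_def)
  ultimately show "\<forall>k\<in>{1..h}. Min V \<le> v k $ i \<and> v k $ i \<le> Min V + Delta_i h v i"
    by fastforce
qed

lemma theta_nth:
  "theta q lam z X j $ i = median (lam j $ i # map (\<lambda>k. lam k $ i) (sorted_list_of_set (X j))
     @ map (\<lambda>t. z X j t $ i) [1..<q - card (X j)])"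
  by (simp add: theta_def Median_def comp_def)

lemma theta_between:
  assumes "finite (X j)" "q - f - 1 \<le> card (X j)" "card (X j) < q" "2 * f + 2 \<le> q"
    and "a \<le> lam j $ i \<and> lam j $ i \<le> b" "\<forall>k\<in>X j. a \<le> lam k $ i \<and> lam k $ i \<le> b"
  shows "a \<le> theta q lam z X j $ i \<and> theta q lam z X j $ i \<le> b"
proof -
  define honest where "honest = lam j $ i # map (\<lambda>k. lam k $ i) (sorted_list_of_set (X j))"
  define byz where "byz = map (\<lambda>t. z X j t $ i) [1..<q - card (X j)]"
  have "\<forall>y\<in>set honest. a \<le> y \<and> y \<le> b" using assms by (auto simp: honest_def)
  then have "filter (\<lambda>y. y < a) honest = []" "filter (\<lambda>y. b < y) honest = []"
    by (auto simp: filter_empty_conv)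
  moreover have "length honest = Suc (card (X j))" "length byz = q - card (X j) - 1"
    using assms by (auto simp: honest_def byz_def)
  ultimately have "a \<le> median (honest @ byz) \<and> median (honest @ byz) \<le> b"
    using assms by (intro median_between[where q = q and f = f])
      (auto intro: order.trans[OF length_filter_le])
  then show ?thesis by (simp add: theta_nth honest_def byz_def)
qed

text \<open>With a full view only the server's own value may be an outlier, and one outlier cannot
  move the median of four or more values.\<close>
lemma theta_between_if_full_view:
  assumes "finite (X j)" "card (X j) = q - 1" "4 \<le> q"
    and "\<forall>k\<in>X j. a \<le> lam k $ i \<and> lam k $ i \<le> b"
  shows "a \<le> theta q lam z X j $ i \<and> theta q lam z X j $ i \<le> b"
proof -
  define received where "received = map (\<lambda>k. lam k $ i) (sorted_list_of_set (X j))"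
  have "\<forall>y\<in>set received. a \<le> y \<and> y \<le> b" using assms by (auto simp: received_def)
  then have "filter (\<lambda>y. y < a) received = []" "filter (\<lambda>y. b < y) received = []"
    by (auto simp: filter_empty_conv)
  moreover have "length received = q - 1" using assms by (simp add: received_def)
  ultimately have "a \<le> median (lam j $ i # received) \<and> median (lam j $ i # received) \<le> b"
    using assms by (intro median_between[where q = q and f = 1]) auto
  moreover have "q - card (X j) = 1" using assms by simp
  ultimately show ?thesis by (simp add: theta_nth received_def)
qed

lemma finite_S_conf: "finite (S_conf f q h)"
  unfolding S_conf_def
  by (rule finite_PiE) (auto intro: finite_subset[of _ "Pow {1..h}"] simp: S_j_def)

lemma exists_S_conf_full_views_in:
  assumes "C \<subseteq> {1..h}" "card C = q"
  obtains s where "s \<in> S_conf f q h" "\<forall>j\<in>{1..h}. s j \<subseteq> C \<and> card (s j) = q - 1"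
proof
  have "finite C" using assms(1) finite_subset by blast
  define x0 where "x0 = (SOME x. x \<in> C)"
  define s where "s = (\<lambda>j\<in>{1..h}. if j \<in> C then C - {j} else C - {x0})"
  have "x0 \<in> C" if "C \<noteq> {}" unfolding x0_def using that by (simp add: some_in_eq)
  then have s: "s j \<subseteq> C - {j} \<and> card (s j) = q - 1" if "j \<in> {1..h}" for j
    using that assms \<open>finite C\<close> by (cases "C = {}") (auto simp: s_def)
  then show "\<forall>j\<in>{1..h}. s j \<subseteq> C \<and> card (s j) = q - 1" by blast
  show "s \<in> S_conf f q h"
    using s assms(1) by (fastforce simp: S_conf_def S_j_def s_def)
qed

lemma exists_S_conf_halving_Delta_i:
  assumes "4 \<le> q" "2 * q \<le> h"
  obtains s where "s \<in> S_conf f q h" "Delta_i h (theta q lam z s) i \<le> Delta_i h lam i / 2"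
proof -
  define D where "D = Delta_i h lam i"
  have "h \<ge> 1" using assms by simp
  then obtain a where a: "\<forall>k\<in>{1..h}. a \<le> lam k $ i \<and> lam k $ i \<le> a + D"
    unfolding D_def by (rule Delta_i_bounding_interval)
  have halving: "\<exists>s\<in>S_conf f q h. Delta_i h (theta q lam z s) i \<le> D / 2"
    if bounds: "hi - lo = D / 2" "q \<le> card {k\<in>{1..h}. lo \<le> lam k $ i \<and> lam k $ i \<le> hi}"
    for lo hi
  proof -
    obtain C where C: "C \<subseteq> {k\<in>{1..h}. lo \<le> lam k $ i \<and> lam k $ i \<le> hi}" "card C = q"
      using bounds(2) by (meson obtain_subset_with_card_n)
    have "C \<subseteq> {1..h}" using C(1) by auto
    then obtain s where s: "s \<in> S_conf f q h" "\<forall>j\<in>{1..h}. s j \<subseteq> C \<and> card (s j) = q - 1"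
      using C(2) by (rule exists_S_conf_full_views_in)
    have "Delta_i h (theta q lam z s) i \<le> hi - lo"
    proof (rule Delta_i_le_if_bounded[OF \<open>h \<ge> 1\<close>], intro ballI)
      fix j assume "j \<in> {1..h}"
      with s have "s j \<subseteq> C" "card (s j) = q - 1" by auto
      moreover have "finite C" using \<open>C \<subseteq> {1..h}\<close> finite_subset by blast
      ultimately show "lo \<le> theta q lam z s j $ i \<and> theta q lam z s j $ i \<le> hi"
        using C(1) assms(1) by (intro theta_between_if_full_view) (auto intro: finite_subset)
    qed
    with s(1) bounds(1) show ?thesis by (intro bexI[where x = s]) auto
  qed
  define m where "m = a + D / 2"
  define L where "L = {k\<in>{1..h}. a \<le> lam k $ i \<and> lam k $ i \<le> m}"
  define U where "U = {k\<in>{1..h}. m \<le> lam k $ i \<and> lam k $ i \<le> a + D}"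
  have "{1..h} \<subseteq> L \<union> U"
  proof
    fix k assume "k \<in> {1..h}"
    with a show "k \<in> L \<union> U" unfolding L_def U_def by (cases "lam k $ i \<le> m") auto
  qed
  then have "card {1..h} \<le> card (L \<union> U)" by (intro card_mono) (simp_all add: L_def U_def)
  then have "h \<le> card L + card U" using card_Un_le[of L U] by simp
  then have "q \<le> card L \<or> q \<le> card U" using assms(2) by linarith
  moreover have "m - a = D / 2" "(a + D) - m = D / 2" by (simp_all add: m_def)
  ultimately have "\<exists>s\<in>S_conf f q h. Delta_i h (theta q lam z s) i \<le> D / 2"
    using halving[of m a] halving[of "a + D" m] unfolding L_def U_def by blast
  then show ?thesis using that unfolding D_def by blast
qed

lemma expectation_le_with_gain_at:
  fixes P :: "'a pmf" and g :: "'a \<Rightarrow> real"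
  assumes "finite (set_pmf P)" "\<forall>x\<in>set_pmf P. g x \<le> D"
    and "g s \<le> D - \<delta>" "0 \<le> \<delta>" "\<rho> \<le> pmf P s"
  shows "measure_pmf.expectation P g \<le> D - \<rho> * \<delta>"
proof -
  have "measure_pmf.expectation P g \<le> measure_pmf.expectation P (\<lambda>x. D - \<delta> * indicator {s} x)"
    using assms by (intro integral_mono_AE integrable_measure_pmf_finite)
      (auto simp: AE_measure_pmf_iff split: split_indicator)
  also have "\<dots> = D - \<delta> * pmf P s"
    using assms(1) by (simp add: integrable_measure_pmf_finite measure_pmf_single)
  also have "\<dots> \<le> D - \<rho> * \<delta>"
    using assms(4,5) by (simp add: mult.commute mult_left_mono)
  finally show ?thesis .
qed

lemma Delta_i_theta_le:
  assumes "X \<in> S_conf f q h" "2 * f + 2 \<le> q" "h \<ge> 1"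
  shows "Delta_i h (theta q lam z X) i \<le> Delta_i h lam i"
proof -
  obtain a where a: "\<forall>k\<in>{1..h}. a \<le> lam k $ i \<and> lam k $ i \<le> a + Delta_i h lam i"
    using \<open>h \<ge> 1\<close> by (rule Delta_i_bounding_interval)
  have "a \<le> theta q lam z X j $ i \<and> theta q lam z X j $ i \<le> a + Delta_i h lam i"
    if "j \<in> {1..h}" for j
  proof -
    from assms(1) that have "X j \<in> S_j f q h j" by (auto simp: S_conf_def)
    with assms(2) have "X j \<subseteq> {1..h}" "q - f - 1 \<le> card (X j)" "card (X j) < q"
      by (auto simp: S_j_def)
    with a that assms(2) show ?thesis
      by (intro theta_between[where f = f]) (auto intro: finite_subset)
  qed
  then have "Delta_i h (theta q lam z X) i \<le> (a + Delta_i h lam i) - a"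
    by (intro Delta_i_le_if_bounded[OF \<open>h \<ge> 1\<close>]) blast
  then show ?thesis by simp
qed

lemma expectation_Delta_i_theta_le:
  assumes "4 \<le> q" "2 * f + 2 \<le> q" "2 * q \<le> h"
    and "set_pmf P \<subseteq> S_conf f q h" "\<forall>s\<in>S_conf f q h. \<rho> \<le> pmf P s"
  shows "measure_pmf.expectation P (\<lambda>X. Delta_i h (theta q lam z X) i)
           \<le> (1 - \<rho> / 2) * Delta_i h lam i"
proof -
  obtain s where s: "s \<in> S_conf f q h" "Delta_i h (theta q lam z s) i \<le> Delta_i h lam i / 2"
    using assms(1,3) by (rule exists_S_conf_halving_Delta_i)
  have "h \<ge> 1" using assms(1,3) by simp
  have "measure_pmf.expectation P (\<lambda>X. Delta_i h (theta q lam z X) i)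
          \<le> Delta_i h lam i - \<rho> * (Delta_i h lam i / 2)"
  proof (rule expectation_le_with_gain_at)
    show "finite (set_pmf P)" using assms(4) finite_S_conf by (rule finite_subset)
    show "\<forall>X\<in>set_pmf P. Delta_i h (theta q lam z X) i \<le> Delta_i h lam i"
      using assms(2,4) \<open>h \<ge> 1\<close> Delta_i_theta_le by blast
  qed (use s assms(5) Delta_i_nonneg[OF \<open>h \<ge> 1\<close>] in auto)
  then show ?thesis by (simp add: algebra_simps)
qed

theorem mainTheorem6:
  fixes f n h q :: nat and \<rho> :: real
    and lam :: "nat \<Rightarrow> real ^ 'd"
    and P :: "(nat \<Rightarrow> nat set) pmf"
    and z :: "(nat \<Rightarrow> nat set) \<Rightarrow> nat \<Rightarrow> nat \<Rightarrow> real ^ 'd"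
  assumes "f \<ge> 1" and "h = n - f"
    and "2 * f + 2 \<le> q" and "q \<le> h div 2"
    and "\<rho> > 0"
    and "set_pmf P \<subseteq> S_conf f q h"
    and "\<forall>s\<in>S_conf f q h. pmf P s \<ge> \<rho>"
  shows "measure_pmf.expectation P (\<lambda>X. Delta h (theta q lam z X))
           \<le> (1 - \<rho> / 4) * Delta h lam
         \<and> 1 - \<rho> / 4 < 1"
proof
  show "1 - \<rho> / 4 < 1" using \<open>\<rho> > 0\<close> by simp
  have q: "4 \<le> q" "2 * q \<le> h" using assms(1,3,4) by auto
  have "finite (set_pmf P)" using assms(6) finite_S_conf by (rule finite_subset)
  then have "measure_pmf.expectation P (\<lambda>X. Delta h (theta q lam z X))
      = (\<Sum>i\<in>UNIV. measure_pmf.expectation P (\<lambda>X. Delta_i h (theta q lam z X) i))"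
    unfolding Delta_def by (intro Bochner_Integration.integral_sum integrable_measure_pmf_finite)
  also have "\<dots> \<le> (\<Sum>i\<in>UNIV. (1 - \<rho> / 2) * Delta_i h lam i)"
    using q assms(3,6,7) by (intro sum_mono expectation_Delta_i_theta_le) auto
  also have "\<dots> \<le> (\<Sum>i\<in>UNIV. (1 - \<rho> / 4) * Delta_i h lam i)"
    using q \<open>\<rho> > 0\<close> by (intro sum_mono mult_right_mono Delta_i_nonneg) auto
  finally show "measure_pmf.expectation P (\<lambda>X. Delta h (theta q lam z X)) \<le> (1 - \<rho> / 4) * Delta h lam"
    by (simp add: Delta_def sum_distrib_left)
qed

end
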